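(* Let $G$ be a profinite group and $H$ an accessible subgroup of $G$ of infinite index. Suppose $G=H_0\ge\cdots\ge H_\lambda\ge\cdots\ge H_\mu=H$ is an accessible series from $G$ to $H$ over an ordinal $\mu$ such that every quotient $H_\lambda/H_{\lambda+1}$ ($\lambda<\mu$) is finite and nontrivial. Then $|\mu|=\omega_0(G/H)$.
   Context: All subgroups are closed. An accessible series from $G$ to a closed subgroup $H$ over an ordinal $\mu$ is a family of closed subgroups $G=H_0\ge\cdots\ge H_\lambda\ge\cdots\ge H_\mu=H$ with $H_{\alpha+1}\trianglelefteq H_\alpha$ for all $\alpha<\mu$ and $H_\alpha=\bigcap_{\beta<\alpha}H_\beta$ for all limit $\alpha\le\mu$; $H$ is accessible if such a series exists. For a closed non-open subgroup $H$ of $G$, $\omega_0(G/H)$ denotes the cardinality of the set of all open subgroups of $G$ containing $H$; $|\mu|$ is the cardinality of the ordinal $\mu$. *)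

theory Defs
  imports "HOL-Analysis.Analysis" "HOL-Algebra.Algebra" "HOL-Library.Equipollence"
begin

definition topological_group :: "('a, 'b) monoid_scheme \<Rightarrow> 'a topology \<Rightarrow> bool" where
  "topological_group G T \<longleftrightarrow>
     group G \<and> topspace T = carrier G \<and>
     continuous_map (prod_topology T T) T (\<lambda>(x, y). x \<otimes>\<^bsub>G\<^esub> y) \<and>
     continuous_map T T (\<lambda>x. inv\<^bsub>G\<^esub> x)"

definition profinite_group :: "('a, 'b) monoid_scheme \<Rightarrow> 'a topology \<Rightarrow> bool" where
  "profinite_group G T \<longleftrightarrow>
     topological_group G T \<and> compact_space T \<and> Hausdorff_space T \<and>
     (\<forall>x\<in>topspace T. connected_component_of_set T x = {x})"

definition closed_subgroup :: "'a set \<Rightarrow> ('a, 'b) monoid_scheme \<Rightarrow> 'a topology \<Rightarrow> bool" where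
  "closed_subgroup K G T \<longleftrightarrow> subgroup K G \<and> closedin T K"

definition open_subgroup :: "'a set \<Rightarrow> ('a, 'b) monoid_scheme \<Rightarrow> 'a topology \<Rightarrow> bool" where
  "open_subgroup K G T \<longleftrightarrow> subgroup K G \<and> openin T K"

definition idx_succ :: "'i::wellorder \<Rightarrow> 'i" where
  "idx_succ a = (LEAST b. a < b)"

definition idx_limit :: "'i::wellorder \<Rightarrow> bool" where
  "idx_limit a \<longleftrightarrow> (\<exists>b. b < a) \<and> (\<forall>b<a. \<exists>c. b < c \<and> c < a)"

text \<open>An accessible series from G to K over the ordinal represented by the
  initial segment of indices up to m (the ordinal \<mu> is the order type of
  {..<m}; index LEAST True is 0, index m is \<mu>).\<close>
definition accessible_series ::
  "('a, 'b) monoid_scheme \<Rightarrow> 'a topology \<Rightarrow> ('i::wellorder \<Rightarrow> 'a set) \<Rightarrow> 'i \<Rightarrow> 'a set \<Rightarrow> bool" where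
  "accessible_series G T Hs m K \<longleftrightarrow>
     (\<forall>a\<le>m. closed_subgroup (Hs a) G T) \<and>
     Hs (LEAST i. True) = carrier G \<and>
     Hs m = K \<and>
     (\<forall>a b. a \<le> b \<and> b \<le> m \<longrightarrow> Hs b \<subseteq> Hs a) \<and>
     (\<forall>a<m. Hs (idx_succ a) \<lhd> (G\<lparr>carrier := Hs a\<rparr>)) \<and>
     (\<forall>a\<le>m. idx_limit a \<longrightarrow> Hs a = (\<Inter>b\<in>{..<a}. Hs b))"

end

theory Submission
  imports Defs
begin

text \<open>Write \<open>O(K)\<close> for the set of open subgroups containing a closed subgroup \<open>K\<close>.
  Let \<open>N\<close> be an open subgroup with \<open>N \<inter> H\<^sub>\<lambda> \<subseteq> H\<^sub>\<lambda>\<^sub>+\<^sub>1\<close>, which exists because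
  the finitely many cosets of \<open>H\<^sub>\<lambda>\<^sub>+\<^sub>1\<close> in \<open>H\<^sub>\<lambda>\<close> are closed. For \<open>U \<in> O(H\<^sub>\<lambda>\<^sub>+\<^sub>1)\<close>
  choose an open normal \<open>M \<subseteq> U \<inter> N\<close>; then \<open>V = M H\<^sub>\<lambda> \<in> O(H\<^sub>\<lambda>)\<close> and
  \<open>V \<inter> N \<subseteq> U\<close>, which leaves finitely many choices of \<open>U\<close> for each \<open>V\<close>. At a limit
  \<open>\<lambda>\<close>, compactness puts every \<open>U \<in> O(H\<^sub>\<lambda>)\<close> into some earlier \<open>O(H\<^sub>\<beta>)\<close>.
  Transfinite induction thus bounds \<open>|O(H)|\<close> by \<open>|\<mu>| + \<aleph>\<^sub>0\<close>, and by a finite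
  number when \<open>\<mu>\<close> is finite; as \<open>O(H)\<close> is infinite for a subgroup of infinite index,
  \<open>\<mu>\<close> is infinite. Conversely, separating a point of \<open>H\<^sub>\<lambda> - H\<^sub>\<lambda>\<^sub>+\<^sub>1\<close> from
  \<open>H\<^sub>\<lambda>\<^sub>+\<^sub>1\<close> by an open subgroup \<open>U\<^sub>\<lambda>\<close> gives an injection \<open>\<lambda> \<mapsto> U\<^sub>\<lambda>\<close> of \<open>\<mu>\<close>
  into \<open>O(H)\<close>.\<close>

(* HOL-Algebra's ring inclusion would make every \<open>\<lesssim>\<close> below ambiguous. *)
no_notation iso_incl (infixl \<open>\<lesssim>\<close> 65)

definition open_overgroups :: "('a, 'b) monoid_scheme \<Rightarrow> 'a topology \<Rightarrow> 'a set \<Rightarrow> 'a set set" where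
  "open_overgroups G T K = {U. open_subgroup U G T \<and> K \<subseteq> U}"

lemma UN_lepoll_infinite:
  assumes "infinite B" "I \<lesssim> B" "\<And>i. i \<in> I \<Longrightarrow> A i \<lesssim> B"
  shows "(\<Union>i\<in>I. A i) \<lesssim> B"
proof -
  have "ordLeq2 (card_of (\<Union>i\<in>I. A i)) (card_of B)"
    by (rule card_of_UNION_ordLeq_infinite)
      (use assms in \<open>auto simp: lepoll_def card_of_ordLeq[symmetric]\<close>)
  then show ?thesis
    by (simp add: lepoll_def card_of_ordLeq[symmetric])
qed

lemma idx_succ_greater: "(a::'i::wellorder) < b \<Longrightarrow> a < idx_succ a"
  unfolding idx_succ_def by (rule LeastI)

lemma idx_succ_least: "(a::'i::wellorder) < b \<Longrightarrow> idx_succ a \<le> b"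
  unfolding idx_succ_def by (rule Least_le)

lemma idx_zero_or_limit_or_succ:
  fixes l :: "'i::wellorder"
  shows "l = (LEAST i. True) \<or> idx_limit l \<or> (\<exists>b<l. idx_succ b = l)"
proof (cases "\<exists>b. b < l")
  case False
  have "(LEAST i::'i. True) \<le> l"
    by (rule Least_le) simp
  then show ?thesis
    using False by (metis order_le_less)
next
  case True
  show ?thesis
  proof (cases "idx_limit l")
    case False
    then obtain b where b: "b < l" "\<not> (\<exists>c. b < c \<and> c < l)"
      using True unfolding idx_limit_def by blast
    then have "idx_succ b = l"
      using idx_succ_greater[OF b(1)] idx_succ_least[OF b(1)] by (metis order_le_less)
    then show ?thesis
      using b(1) by blast
  qed simp
qed

text \<open>The bound \<open>{..l} \<times> \<nat>\<close> has cardinality \<open>|l + 1| + \<aleph>\<^sub>0\<close>.\<close>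

lemma lepoll_atMost_times_nat:
  fixes S :: "'i::wellorder \<Rightarrow> 'x set"
  assumes zero: "finite (S (LEAST i. True))"
    and succ: "\<And>b. b < m \<Longrightarrow>
      \<exists>F. (\<forall>V\<in>S b. finite (F V)) \<and> S (idx_succ b) \<subseteq> (\<Union>V\<in>S b. F V)"
    and limit: "\<And>l. l \<le> m \<Longrightarrow> idx_limit l \<Longrightarrow> S l \<subseteq> (\<Union>b<l. S b)"
  shows "l \<le> m \<Longrightarrow> S l \<lesssim> {..l} \<times> (UNIV::nat set) \<and> (finite {..l} \<longrightarrow> finite (S l))"
proof (induction l rule: less_induct)
  case (less l)
  let ?B = "{..l} \<times> (UNIV::nat set)"
  have inf: "infinite ?B"
    using finite_cartesian_productD2 by blast
  have IH: "S b \<lesssim> ?B" "finite {..l} \<Longrightarrow> finite (S b)" if "b < l" for b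
  proof -
    have sub: "{..b} \<subseteq> {..l}" "{..b} \<times> (UNIV::nat set) \<subseteq> ?B"
      using that by auto
    have "S b \<lesssim> {..b} \<times> (UNIV::nat set)" "finite {..b} \<Longrightarrow> finite (S b)"
      using less.IH[OF that] that less.prems by auto
    then show "S b \<lesssim> ?B" "finite {..l} \<Longrightarrow> finite (S b)"
      using lepoll_trans[OF _ subset_imp_lepoll[OF sub(2)]] finite_subset[OF sub(1)] by blast+
  qed
  consider "l = (LEAST i. True)" | "idx_limit l" | b where "b < l" "idx_succ b = l"
    using idx_zero_or_limit_or_succ by blast
  then show ?case
  proof cases
    case 1
    then show ?thesis
      using zero finite_lepoll_infinite[OF inf] by simp
  next
    case 2
    have "{..<l} \<lesssim> ?B"
      by (rule subset_image_lepoll[of _ fst]) force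
    then have "(\<Union>b<l. S b) \<lesssim> ?B"
      by (rule UN_lepoll_infinite[OF inf]) (simp add: IH)
    moreover have "finite (\<Union>b<l. S b)" if "finite {..l}"
    proof -
      have "finite {..<l}"
        using that by (rule finite_subset[rotated]) auto
      then show ?thesis
        using IH(2) that by simp
    qed
    ultimately show ?thesis
      using limit[OF less.prems 2] lepoll_trans[OF subset_imp_lepoll] finite_subset by blast
  next
    case (3 b)
    then obtain F where F: "\<forall>V\<in>S b. finite (F V)" "S l \<subseteq> (\<Union>V\<in>S b. F V)"
      using succ less.prems by (metis order.strict_trans2)
    have "(\<Union>V\<in>S b. F V) \<lesssim> ?B"
      by (rule UN_lepoll_infinite[OF inf IH(1)[OF 3(1)]]) (use F(1) finite_lepoll_infinite[OF inf] in blast)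
    moreover have "finite {..l} \<Longrightarrow> finite (\<Union>V\<in>S b. F V)"
      using F(1) IH(2)[OF 3(1)] by blast
    ultimately show ?thesis
      using F(2) lepoll_trans[OF subset_imp_lepoll] finite_subset by blast
  qed
qed

lemma lepoll_lessThan:
  fixes S :: "'i::wellorder \<Rightarrow> 'x set"
  assumes zero: "finite (S (LEAST i. True))"
    and succ: "\<And>b. b < m \<Longrightarrow>
      \<exists>F. (\<forall>V\<in>S b. finite (F V)) \<and> S (idx_succ b) \<subseteq> (\<Union>V\<in>S b. F V)"
    and limit: "\<And>l. l \<le> m \<Longrightarrow> idx_limit l \<Longrightarrow> S l \<subseteq> (\<Union>b<l. S b)"
    and inf_S: "infinite (S m)"
  shows "S m \<lesssim> {..<m}"
proof -
  have bound: "S m \<lesssim> {..m} \<times> (UNIV::nat set)" and fin: "finite {..m} \<Longrightarrow> finite (S m)"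
    using lepoll_atMost_times_nat[OF zero succ limit order_refl] by auto
  have atMost: "{..m} = insert m {..<m}"
    by auto
  then have inf: "infinite {..<m}"
    using fin inf_S by auto
  have "(\<Union>i\<in>{..m}. {i} \<times> (UNIV::nat set)) \<lesssim> {..<m}"
  proof (rule UN_lepoll_infinite[OF inf])
    show "{..m} \<lesssim> {..<m}"
      using atMost infinite_insert_eqpoll[OF inf] eqpoll_imp_lepoll by metis
    show "{i} \<times> (UNIV::nat set) \<lesssim> {..<m}" for i
      using lepoll_trans[OF eqpoll_imp_lepoll[OF times_singleton_eqpoll]] inf
      by (simp add: infinite_le_lepoll)
  qed
  moreover have "{..m} \<times> (UNIV::nat set) = (\<Union>i\<in>{..m}. {i} \<times> UNIV)"
    by auto
  ultimately show ?thesis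
    using lepoll_trans[OF bound] by simp
qed

lemma accessible_seriesD:
  assumes "accessible_series G T Hs m K"
  shows "a \<le> m \<Longrightarrow> closed_subgroup (Hs a) G T"
    and "Hs (LEAST i. True) = carrier G"
    and "Hs m = K"
    and "a \<le> b \<Longrightarrow> b \<le> m \<Longrightarrow> Hs b \<subseteq> Hs a"
    and "a \<le> m \<Longrightarrow> idx_limit a \<Longrightarrow> Hs a = (\<Inter>b<a. Hs b)"
  using assms unfolding accessible_series_def by simp_all

lemma compact_space_Inter_chain_subset:
  fixes K :: "'i::linorder \<Rightarrow> 'a set"
  assumes "compact_space T" "I \<noteq> {}" "\<And>i. i \<in> I \<Longrightarrow> closedin T (K i)"
    and chain: "\<And>i j. i \<in> I \<Longrightarrow> j \<in> I \<Longrightarrow> i \<le> j \<Longrightarrow> K j \<subseteq> K i"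
    and "openin T U" "(\<Inter>i\<in>I. K i) \<subseteq> U"
  shows "\<exists>i\<in>I. K i \<subseteq> U"
proof -
  have "compactin T (topspace T - U)"
    using assms(1,5) by (simp add: closedin_compact_space closedin_diff)
  moreover have "topspace T - U \<subseteq> \<Union>((\<lambda>i. topspace T - K i) ` I)"
    using assms(6) by blast
  moreover have "openin T V" if "V \<in> (\<lambda>i. topspace T - K i) ` I" for V
    using that assms(3) by (auto simp: closedin_def)
  ultimately obtain \<C> where \<C>: "finite \<C>" "\<C> \<subseteq> (\<lambda>i. topspace T - K i) ` I" "topspace T - U \<subseteq> \<Union>\<C>"
    using compactinD by metis
  obtain J where "J \<subseteq> I" "finite J" "\<C> = (\<lambda>i. topspace T - K i) ` J"
    using finite_subset_image[OF \<C>(1,2)] by blast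
  then have J: "finite J" "J \<subseteq> I" "topspace T - U \<subseteq> (\<Union>i\<in>J. topspace T - K i)"
    using \<C>(3) by auto
  show ?thesis
  proof (cases "J = {}")
    case True
    obtain i where "i \<in> I"
      using assms(2) by blast
    moreover have "K i \<subseteq> topspace T"
      using closedin_subset assms(3)[OF \<open>i \<in> I\<close>] by blast
    ultimately show ?thesis
      using J(3) True by blast
  next
    case False
    then have max: "Max J \<in> I"
      using J Max_in by blast
    have "K (Max J) \<subseteq> K i" if "i \<in> J" for i
      using chain[OF _ max Max_ge[OF J(1) that]] J(2) that by blast
    then have "topspace T - U \<subseteq> topspace T - K (Max J)"
      using J(3) by blast
    moreover have "K (Max J) \<subseteq> topspace T"
      using closedin_subset assms(3)[OF max] by blast
    ultimately show ?thesis
      using max by blast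
  qed
qed

lemma clopen_nbhd_totally_disconnected:
  assumes "compact_space T" "Hausdorff_space T" "connected_component_of_set T x = {x}"
    and "openin T W" "x \<in> W"
  shows "\<exists>C. openin T C \<and> closedin T C \<and> x \<in> C \<and> C \<subseteq> W"
proof -
  have x: "x \<in> topspace T"
    using assms(4,5) openin_subset by blast
  have "quasi_component_of_set T x = {x}"
    using quasi_eq_connected_component_of[of T] assms(1-3) by simp
  then have "{x} \<in> quasi_components_of T"
    using quasi_component_in_quasi_components_of[of T x] x by simp
  moreover have "compactin T (topspace T - W)"
    using assms(1,4) by (simp add: closedin_compact_space closedin_diff)
  ultimately have "separated_between T {x} (topspace T - W) \<longleftrightarrow> disjnt {x} (topspace T - W)"
    by (rule separated_between_quasi_component_compact)
  then have "separated_between T {x} (topspace T - W)"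
    using assms(5) by (simp add: disjnt_def)
  then obtain U V where UV: "openin T U" "openin T V" "U \<union> V = topspace T" "disjnt U V"
    "x \<in> U" "topspace T - W \<subseteq> V"
    unfolding separated_between_def by blast
  then have "U = topspace T - V"
    unfolding disjnt_def by blast
  then have "closedin T U"
    using UV(2) by (simp add: closedin_diff)
  moreover have "U \<subseteq> W"
    using UV(3,4,6) unfolding disjnt_def by blast
  ultimately show ?thesis
    using UV(1,5) by blast
qed

lemma (in group) subgroup_mult_stable:
  assumes "C \<subseteq> carrier G" "\<one> \<in> C"
  shows "subgroup {g \<in> carrier G. \<forall>c\<in>C. c \<otimes> g \<in> C \<and> c \<otimes> inv g \<in> C} G"
proof (rule subgroupI)
  have "\<one> \<in> {g \<in> carrier G. \<forall>c\<in>C. c \<otimes> g \<in> C \<and> c \<otimes> inv g \<in> C}"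
    using assms by auto
  then show "{g \<in> carrier G. \<forall>c\<in>C. c \<otimes> g \<in> C \<and> c \<otimes> inv g \<in> C} \<noteq> {}"
    by blast
  fix a b
  assume a: "a \<in> {g \<in> carrier G. \<forall>c\<in>C. c \<otimes> g \<in> C \<and> c \<otimes> inv g \<in> C}"
    and b: "b \<in> {g \<in> carrier G. \<forall>c\<in>C. c \<otimes> g \<in> C \<and> c \<otimes> inv g \<in> C}"
  have "c \<otimes> (a \<otimes> b) \<in> C \<and> c \<otimes> inv (a \<otimes> b) \<in> C" if "c \<in> C" for c
  proof -
    have "c \<otimes> (a \<otimes> b) = c \<otimes> a \<otimes> b" "c \<otimes> inv (a \<otimes> b) = c \<otimes> inv b \<otimes> inv a"
      using a b that assms(1) by (auto simp: m_assoc inv_mult_group)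
    then show ?thesis
      using a b that by simp
  qed
  then show "a \<otimes> b \<in> {g \<in> carrier G. \<forall>c\<in>C. c \<otimes> g \<in> C \<and> c \<otimes> inv g \<in> C}"
    using a b by simp
qed auto

definition (in group) normal_core :: "'a set \<Rightarrow> 'a set" where
  "normal_core U = {g \<in> carrier G. \<forall>x\<in>carrier G. x \<otimes> g \<otimes> inv x \<in> U}"

lemma (in group) normal_core_subset: "normal_core U \<subseteq> U"
proof
  fix g
  assume "g \<in> normal_core U"
  then have "g \<in> carrier G" "\<one> \<otimes> g \<otimes> inv \<one> \<in> U"
    unfolding normal_core_def using one_closed by blast+
  then show "g \<in> U"
    by simp
qed

lemma (in group) normal_core_normal:
  assumes U: "subgroup U G"
  shows "normal_core U \<lhd> G"
proof (subst normal_inv_iff, intro conjI ballI)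
  show "subgroup (normal_core U) G"
  proof (rule subgroupI)
    show "normal_core U \<noteq> {}"
      using U by (force simp: normal_core_def subgroup.one_closed)
    fix a b
    assume a: "a \<in> normal_core U" and b: "b \<in> normal_core U"
    have ab: "a \<in> carrier G" "b \<in> carrier G"
      using a b by (auto simp: normal_core_def)
    have "x \<otimes> inv a \<otimes> inv x = inv (x \<otimes> a \<otimes> inv x)" if "x \<in> carrier G" for x
      using ab that by (simp add: m_assoc inv_mult_group)
    moreover have "x \<otimes> (a \<otimes> b) \<otimes> inv x = (x \<otimes> a \<otimes> inv x) \<otimes> (x \<otimes> b \<otimes> inv x)"
      if x: "x \<in> carrier G" for x
    proof -
      have "inv x \<otimes> (x \<otimes> (b \<otimes> inv x)) = b \<otimes> inv x"
        using ab x by (simp add: m_assoc[symmetric])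
      then show ?thesis
        using ab x by (simp add: m_assoc)
    qed
    ultimately show "inv a \<in> normal_core U" "a \<otimes> b \<in> normal_core U"
      using a b U by (auto simp: normal_core_def subgroup.m_inv_closed subgroup.m_closed)
  qed (auto simp: normal_core_def)
next
  fix x h
  assume x: "x \<in> carrier G" and h: "h \<in> normal_core U"
  have "y \<otimes> (x \<otimes> h \<otimes> inv x) \<otimes> inv y = (y \<otimes> x) \<otimes> h \<otimes> inv (y \<otimes> x)" if "y \<in> carrier G" for y
    using x h that by (simp add: normal_core_def m_assoc inv_mult_group)
  then show "x \<otimes> h \<otimes> inv x \<in> normal_core U"
    using x h by (simp add: normal_core_def)
qed

lemma (in group) conj_mem_iff_r_coset:
  assumes U: "subgroup U G" and x: "x \<in> carrier G" and g: "g \<in> carrier G"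
  shows "(\<forall>y\<in>U #> x. y \<otimes> g \<otimes> inv y \<in> U) \<longleftrightarrow> x \<otimes> g \<otimes> inv x \<in> U"
proof
  assume "\<forall>y\<in>U #> x. y \<otimes> g \<otimes> inv y \<in> U"
  then show "x \<otimes> g \<otimes> inv x \<in> U"
    using rcos_self[OF x U] by blast
next
  assume xg: "x \<otimes> g \<otimes> inv x \<in> U"
  show "\<forall>y\<in>U #> x. y \<otimes> g \<otimes> inv y \<in> U"
  proof
    fix y
    assume "y \<in> U #> x"
    then obtain u where u: "u \<in> U" "y = u \<otimes> x"
      unfolding r_coset_def by blast
    have "u \<in> carrier G"
      using subgroup.mem_carrier[OF U u(1)] .
    then have "y \<otimes> g \<otimes> inv y = u \<otimes> (x \<otimes> g \<otimes> inv x) \<otimes> inv u"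
      unfolding u(2) using x g by (simp add: m_assoc inv_mult_group)
    moreover have "u \<otimes> (x \<otimes> g \<otimes> inv x) \<otimes> inv u \<in> U"
      using xg u(1) U by (simp add: subgroup.m_closed subgroup.m_inv_closed)
    ultimately show "y \<otimes> g \<otimes> inv y \<in> U"
      by simp
  qed
qed

lemma (in group) finite_overgroups:
  assumes P: "subgroup P G" and fin: "finite (rcosets P)"
  shows "finite {U. subgroup U G \<and> P \<subseteq> U}"
proof (rule finite_subset)
  have cover: "U = \<Union>{C \<in> rcosets P. C \<subseteq> U}" if U: "subgroup U G" "P \<subseteq> U" for U
  proof (intro equalityI subsetI)
    fix u
    assume u: "u \<in> U"
    have "P #> u \<subseteq> U"
    proof
      fix y
      assume "y \<in> P #> u"
      then obtain p where "p \<in> P" "y = p \<otimes> u"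
        unfolding r_coset_def by blast
      then show "y \<in> U"
        using u U(2) subgroup.m_closed[OF U(1)] by blast
    qed
    moreover have "u \<in> carrier G"
      using subgroup.mem_carrier[OF U(1) u] .
    then have "P #> u \<in> rcosets P" "u \<in> P #> u"
      using rcos_self[OF _ P] unfolding RCOSETS_def by blast+
    ultimately show "u \<in> \<Union>{C \<in> rcosets P. C \<subseteq> U}"
      by blast
  qed auto
  show "{U. subgroup U G \<and> P \<subseteq> U} \<subseteq> Union ` Pow (rcosets P)"
  proof
    fix U
    assume "U \<in> {U. subgroup U G \<and> P \<subseteq> U}"
    then have "U = \<Union>{C \<in> rcosets P. C \<subseteq> U}"
      by (intro cover) auto
    then show "U \<in> Union ` Pow (rcosets P)"
      by (rule image_eqI) auto
  qed
qed (use fin in simp)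

locale topological_grp = group G for G (structure) + fixes T
  assumes topological_group: "topological_group G T"
begin

lemma topspace_eq_carrier: "topspace T = carrier G"
  using topological_group by (simp add: topological_group_def)

lemma continuous_map_mult: "continuous_map (prod_topology T T) T (\<lambda>(x, y). x \<otimes> y)"
  using topological_group by (simp add: topological_group_def)

lemma continuous_map_inv: "continuous_map T T (\<lambda>x. inv x)"
  using topological_group by (simp add: topological_group_def)

lemma continuous_map_mult_left:
  assumes "a \<in> carrier G"
  shows "continuous_map T T (\<lambda>x. a \<otimes> x)"
proof -
  have "continuous_map T (prod_topology T T) (\<lambda>x. (a, x))"
    using assms topspace_eq_carrier by (intro continuous_map_pairedI) auto
  from continuous_map_compose[OF this continuous_map_mult] show ?thesis
    by (simp add: o_def)
qed

lemma continuous_map_mult_right: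
  assumes "a \<in> carrier G"
  shows "continuous_map T T (\<lambda>x. x \<otimes> a)"
proof -
  have "continuous_map T (prod_topology T T) (\<lambda>x. (x, a))"
    using assms topspace_eq_carrier by (intro continuous_map_pairedI) auto
  from continuous_map_compose[OF this continuous_map_mult] show ?thesis
    by (simp add: o_def)
qed

lemma continuous_map_conj: "r \<in> carrier G \<Longrightarrow> continuous_map T T (\<lambda>g. r \<otimes> g \<otimes> inv r)"
  using continuous_map_compose[OF continuous_map_mult_left continuous_map_mult_right[OF inv_closed]]
  by (simp add: o_def)

lemma openin_preimage:
  "continuous_map T T f \<Longrightarrow> openin T S \<Longrightarrow> openin T {x \<in> carrier G. f x \<in> S}"
  using openin_continuous_map_preimage[of T T f S] topspace_eq_carrier by simp

lemma closedin_preimage: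
  "continuous_map T T f \<Longrightarrow> closedin T S \<Longrightarrow> closedin T {x \<in> carrier G. f x \<in> S}"
  using closedin_continuous_map_preimage[of T T f S] topspace_eq_carrier by simp

lemma r_coset_eq_preimage:
  assumes "U \<subseteq> carrier G" "a \<in> carrier G"
  shows "U #> a = {x \<in> carrier G. x \<otimes> inv a \<in> U}"
proof (intro equalityI subsetI)
  fix x
  assume "x \<in> {x \<in> carrier G. x \<otimes> inv a \<in> U}"
  moreover have "x = (x \<otimes> inv a) \<otimes> a" if "x \<in> carrier G"
    using assms that by (simp add: m_assoc)
  ultimately show "x \<in> U #> a"
    unfolding r_coset_def by blast
next
  fix x
  assume "x \<in> U #> a"
  then obtain u where u: "u \<in> U" "x = u \<otimes> a"
    unfolding r_coset_def by blast
  then have "x \<otimes> inv a = u"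
    using assms by (auto simp: m_assoc)
  then show "x \<in> {x \<in> carrier G. x \<otimes> inv a \<in> U}"
    using u assms by auto
qed

lemma openin_r_coset: "openin T U \<Longrightarrow> a \<in> carrier G \<Longrightarrow> openin T (U #> a)"
  using r_coset_eq_preimage[OF openin_subset[of T U, unfolded topspace_eq_carrier]]
    openin_preimage[OF continuous_map_mult_right[OF inv_closed]] by simp

lemma closedin_r_coset: "closedin T U \<Longrightarrow> a \<in> carrier G \<Longrightarrow> closedin T (U #> a)"
  using r_coset_eq_preimage[OF closedin_subset[of T U, unfolded topspace_eq_carrier]]
    closedin_preimage[OF continuous_map_mult_right[OF inv_closed]] by simp

lemma openin_subgroupI:
  assumes V: "subgroup V G" and W: "openin T W" "\<one> \<in> W" "W \<subseteq> V"
  shows "openin T V"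
proof (subst openin_subopen, intro ballI)
  fix v
  assume v: "v \<in> V"
  then have vG: "v \<in> carrier G"
    using subgroup.mem_carrier[OF V] by simp
  have "openin T (W #> v)"
    using openin_r_coset[OF W(1) vG] .
  moreover have "v \<in> W #> v"
    using W(2) vG unfolding r_coset_def by force
  moreover have "W #> v \<subseteq> V"
    using W(3) v V by (auto simp: r_coset_def subgroup.m_closed)
  ultimately show "\<exists>S. openin T S \<and> v \<in> S \<and> S \<subseteq> V"
    by blast
qed

lemma open_subgroup_carrier: "open_subgroup (carrier G) G T"
  using subgroup_self topspace_eq_carrier openin_topspace[of T] by (simp add: open_subgroup_def)

lemma open_subgroup_Int:
  "open_subgroup U G T \<Longrightarrow> open_subgroup V G T \<Longrightarrow> open_subgroup (U \<inter> V) G T"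
  unfolding open_subgroup_def by (simp add: subgroups_Inter_pair openin_Int)

lemma open_subgroup_normal_set_mult:
  assumes N: "N \<lhd> G" "openin T N" and K: "subgroup K G"
  shows "open_subgroup (N <#> K) G T" "K \<subseteq> N <#> K"
proof -
  have "subgroup (N <#> K) G"
    using N K by (simp add: second_isomorphism_grp.normal_set_mult_subgroup
      second_isomorphism_grp_def second_isomorphism_grp_axioms_def)
  moreover have one: "\<one> \<in> N" "\<one> \<in> K"
    using N(1) K by (simp_all add: normal_imp_subgroup subgroup.one_closed)
  moreover have "N \<subseteq> N <#> K" "K \<subseteq> N <#> K"
  proof (safe)
    fix x
    assume x: "x \<in> N"
    have "x \<otimes> \<one> \<in> N <#> K"
      using x one unfolding set_mult_def by blast
    then show "x \<in> N <#> K"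
      using x subgroup.mem_carrier[OF normal_imp_subgroup[OF N(1)]] by simp
  next
    fix x
    assume x: "x \<in> K"
    have "\<one> \<otimes> x \<in> N <#> K"
      using x one unfolding set_mult_def by blast
    then show "x \<in> N <#> K"
      using x subgroup.mem_carrier[OF K] by simp
  qed
  ultimately show "open_subgroup (N <#> K) G T" "K \<subseteq> N <#> K"
    using openin_subgroupI[OF _ N(2)] by (auto simp: open_subgroup_def)
qed

lemma exists_nbhd_mult_subset:
  assumes "compactin T C" "openin T C"
  shows "\<exists>V. openin T V \<and> \<one> \<in> V \<and> (\<forall>c\<in>C. \<forall>v\<in>V. c \<otimes> v \<in> C)"
proof -
  define W where "W = {z \<in> topspace (prod_topology T T). (\<lambda>(x, y). x \<otimes> y) z \<in> C}"
  have "openin (prod_topology T T) W"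
    unfolding W_def using openin_continuous_map_preimage[OF continuous_map_mult assms(2)] .
  moreover have "C \<times> {\<one>} \<subseteq> W"
    unfolding W_def using openin_subset[OF assms(2)] by (auto simp: topspace_eq_carrier)
  ultimately obtain U V where UV: "openin T V" "C \<subseteq> U" "\<one> \<in> V" "U \<times> V \<subseteq> W"
    using tube_lemma_left[OF _ assms(1)] topspace_eq_carrier by (metis one_closed)
  have "c \<otimes> v \<in> C" if "c \<in> C" "v \<in> V" for c v
  proof -
    have "(c, v) \<in> W"
      by (rule subsetD[OF UV(4)]) (use that UV(2) in auto)
    then show ?thesis
      unfolding W_def by simp
  qed
  then show ?thesis
    using UV(1,3) by blast
qed

lemma exists_open_subgroup_subset_compact:
  assumes C: "compactin T C" "openin T C" "\<one> \<in> C"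
  shows "\<exists>U. open_subgroup U G T \<and> U \<subseteq> C"
proof -
  define U where "U = {g \<in> carrier G. \<forall>c\<in>C. c \<otimes> g \<in> C \<and> c \<otimes> inv g \<in> C}"
  have C_carrier: "C \<subseteq> carrier G"
    using openin_subset[OF C(2)] topspace_eq_carrier by simp
  have U: "subgroup U G"
    unfolding U_def using subgroup_mult_stable[OF C_carrier C(3)] .
  obtain V where V: "openin T V" "\<one> \<in> V" "\<And>c v. c \<in> C \<Longrightarrow> v \<in> V \<Longrightarrow> c \<otimes> v \<in> C"
    using exists_nbhd_mult_subset[OF C(1,2)] by blast
  let ?V' = "V \<inter> {x \<in> carrier G. inv x \<in> V}"
  have "openin T ?V'"
    by (rule openin_Int[OF V(1) openin_preimage[OF continuous_map_inv V(1)]])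
  moreover have "\<one> \<in> ?V'"
    using V(2) by simp
  moreover have "?V' \<subseteq> U"
    unfolding U_def using V(3) by auto
  ultimately have "openin T U"
    by (rule openin_subgroupI[OF U])
  moreover have "U \<subseteq> C"
    unfolding U_def using C(3) by force
  ultimately show ?thesis
    using U by (auto simp: open_subgroup_def)
qed

end

locale profinite_grp = group G for G (structure) + fixes T
  assumes profinite: "profinite_group G T"

sublocale profinite_grp \<subseteq> topological_grp
  using profinite by unfold_locales (simp add: profinite_group_def)

context profinite_grp
begin

lemma compact: "compact_space T"
  using profinite by (simp add: profinite_group_def)

lemma finite_rcosets_open_subgroup:
  assumes U: "open_subgroup U G T"
  shows "finite (rcosets U)"
proof -
  have sg: "subgroup U G" and oU: "openin T U"
    using U by (auto simp: open_subgroup_def)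
  have op: "\<forall>C\<in>rcosets U. openin T C"
    unfolding RCOSETS_def using openin_r_coset[OF oU] by blast
  have cov: "topspace T \<subseteq> \<Union>(rcosets U)"
    using topspace_eq_carrier rcosets_part_G[OF sg] by simp
  obtain F where F: "finite F" "F \<subseteq> rcosets U" "topspace T \<subseteq> \<Union>F"
    using compact[unfolded compact_space_alt, rule_format, OF conjI[OF op cov]] by blast
  have "rcosets U \<subseteq> F"
  proof
    fix C
    assume C: "C \<in> rcosets U"
    then obtain a where a: "a \<in> carrier G" "C = U #> a"
      unfolding RCOSETS_def by blast
    then have aC: "a \<in> C"
      using rcos_self[OF a(1) sg] by simp
    then obtain D where D: "D \<in> F" "a \<in> D"
      using F a topspace_eq_carrier by blast
    have "D \<in> rcosets U"
      using D F by blast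
    then have "\<not> disjnt C D \<Longrightarrow> C = D"
      using pairwiseD[OF rcos_disjoint[OF sg] C] by blast
    then show "C \<in> F"
      using D aC by (metis disjnt_iff)
  qed
  then show ?thesis
    using F finite_subset by blast
qed

lemma exists_open_subgroup_subset:
  assumes "openin T W" "\<one> \<in> W"
  shows "\<exists>U. open_subgroup U G T \<and> U \<subseteq> W"
proof -
  obtain C where C: "openin T C" "closedin T C" "\<one> \<in> C" "C \<subseteq> W"
    using clopen_nbhd_totally_disconnected[OF compact _ _ assms] profinite topspace_eq_carrier
    by (auto simp: profinite_group_def)
  then show ?thesis
    using exists_open_subgroup_subset_compact[OF closedin_compact_space[OF compact C(2)] C(1,3)]
    by blast
qed

text \<open>The conjugate of \<open>U\<close> by \<open>x\<close> only depends on the coset \<open>U x\<close>, so the normal core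
  is a finite intersection of open sets.\<close>

lemma openin_normal_core:
  assumes U: "open_subgroup U G T"
  shows "openin T (normal_core U)"
proof -
  have sg: "subgroup U G" and oU: "openin T U"
    using U by (auto simp: open_subgroup_def)
  define S where "S x = {g \<in> carrier G. x \<otimes> g \<otimes> inv x \<in> U}" for x
  define S' where "S' C = {g \<in> carrier G. \<forall>y\<in>C. y \<otimes> g \<otimes> inv y \<in> U}" for C
  have "S x = S' (U #> x)" if "x \<in> carrier G" for x
    unfolding S_def S'_def using conj_mem_iff_r_coset[OF sg that] by auto
  then have "S ` carrier G \<subseteq> S' ` (rcosets U)"
    unfolding RCOSETS_def by blast
  then have "finite (S ` carrier G)"
    using finite_rcosets_open_subgroup[OF U] finite_surj by blast
  moreover have "normal_core U = \<Inter>(S ` carrier G)"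
    unfolding normal_core_def S_def by auto
  moreover have "openin T (S x)" if "x \<in> carrier G" for x
    unfolding S_def using openin_preimage[OF continuous_map_conj[OF that] oU] .
  ultimately show ?thesis
    by (auto intro!: openin_Inter)
qed

lemma exists_open_normal_subgroup_subset:
  assumes "open_subgroup U G T"
  shows "\<exists>N. N \<lhd> G \<and> openin T N \<and> N \<subseteq> U"
proof (intro exI conjI)
  show "normal_core U \<lhd> G"
    using assms normal_core_normal by (simp add: open_subgroup_def)
qed (use assms normal_core_subset openin_normal_core in auto)

lemma exists_open_subgroup_separating:
  assumes K: "closed_subgroup K G T" and x: "x \<in> carrier G" "x \<notin> K"
  shows "\<exists>U. open_subgroup U G T \<and> K \<subseteq> U \<and> x \<notin> U"
proof -
  have sgK: "subgroup K G" and cK: "closedin T K"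
    using K by (auto simp: closed_subgroup_def)
  define W where "W = topspace T - {y \<in> carrier G. inv y \<otimes> x \<in> K}"
  have "continuous_map T T (\<lambda>y. inv y \<otimes> x)"
    using continuous_map_compose[OF continuous_map_inv continuous_map_mult_right[OF x(1)]]
    by (simp add: o_def)
  then have "openin T W"
    unfolding W_def by (rule openin_diff[OF openin_topspace closedin_preimage[OF _ cK]])
  moreover have "\<one> \<in> W"
    unfolding W_def using x topspace_eq_carrier by simp
  ultimately obtain V where V: "open_subgroup V G T" "V \<subseteq> W"
    using exists_open_subgroup_subset by blast
  then obtain N where N: "N \<lhd> G" "openin T N" "N \<subseteq> W"
    using exists_open_normal_subgroup_subset by blast
  have "x \<notin> N <#> K"
  proof
    assume "x \<in> N <#> K"
    then obtain n k where nk: "n \<in> N" "k \<in> K" "x = n \<otimes> k"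
      unfolding set_mult_def by blast
    have nG: "n \<in> carrier G"
      using nk(1) N(3) topspace_eq_carrier unfolding W_def by blast
    have "inv n \<otimes> x = k"
      unfolding nk(3) using nG subgroup.mem_carrier[OF sgK nk(2)] by (simp add: m_assoc[symmetric])
    then have "n \<notin> W"
      using nG nk(2) unfolding W_def by simp
    then show False
      using nk(1) N(3) by blast
  qed
  then show ?thesis
    using open_subgroup_normal_set_mult[OF N(1,2) sgK] by blast
qed

lemma infinite_open_overgroups:
  assumes H: "closed_subgroup H G T" and inf: "infinite (rcosets H)"
  shows "infinite (open_overgroups G T H)"
proof
  assume fin: "finite (open_overgroups G T H)"
  have sgH: "subgroup H G"
    using H by (simp add: closed_subgroup_def)
  have carrier: "carrier G \<in> open_overgroups G T H"
    using open_subgroup_carrier subgroup.subset[OF sgH] by (simp add: open_overgroups_def)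
  have "\<Inter>(open_overgroups G T H) = H"
  proof (intro equalityI subsetI)
    fix x
    assume x: "x \<in> \<Inter>(open_overgroups G T H)"
    then have "x \<in> carrier G"
      using carrier by blast
    then show "x \<in> H"
      using x exists_open_subgroup_separating[OF H] by (fastforce simp: open_overgroups_def)
  qed (auto simp: open_overgroups_def)
  moreover have "open_subgroup (\<Inter>(open_overgroups G T H)) G T"
    using fin carrier unfolding open_subgroup_def open_overgroups_def
    by (intro conjI subgroups_Inter openin_Inter) auto
  ultimately show False
    using finite_rcosets_open_subgroup inf by simp
qed

lemma open_overgroups_carrier: "open_overgroups G T (carrier G) = {carrier G}"
proof -
  have "U = carrier G" if "open_subgroup U G T" "carrier G \<subseteq> U" for U
    using that subgroup.subset[of U G] by (auto simp: open_subgroup_def)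
  then show ?thesis
    using open_subgroup_carrier by (auto simp: open_overgroups_def)
qed

lemma exists_open_subgroup_Int_subset:
  assumes K1: "subgroup K1 G" and K2: "closed_subgroup K2 G T"
    and fin: "finite (rcosets\<^bsub>G\<lparr>carrier := K1\<rparr>\<^esub> K2)"
  shows "\<exists>N. open_subgroup N G T \<and> N \<inter> K1 \<subseteq> K2"
proof -
  have sg2: "subgroup K2 G" and c2: "closedin T K2"
    using K2 by (auto simp: closed_subgroup_def)
  have cosets: "rcosets\<^bsub>G\<lparr>carrier := K1\<rparr>\<^esub> K2 = (\<Union>a\<in>K1. {K2 #> a})"
    unfolding RCOSETS_def by simp
  define Bad where "Bad = {C \<in> rcosets\<^bsub>G\<lparr>carrier := K1\<rparr>\<^esub> K2. \<one> \<notin> C}"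
  have "closedin T (\<Union>Bad)"
  proof (rule closedin_Union)
    show "finite Bad"
      using fin unfolding Bad_def by simp
    show "closedin T C" if "C \<in> Bad" for C
      using that closedin_r_coset[OF c2] subgroup.mem_carrier[OF K1]
      unfolding Bad_def cosets by auto
  qed
  then have "openin T (topspace T - \<Union>Bad)"
    by (rule openin_diff[OF openin_topspace])
  moreover have "\<one> \<in> topspace T - \<Union>Bad"
    unfolding Bad_def using topspace_eq_carrier by auto
  ultimately obtain N where N: "open_subgroup N G T" "N \<subseteq> topspace T - \<Union>Bad"
    using exists_open_subgroup_subset by blast
  have "n \<in> K2" if n: "n \<in> N" "n \<in> K1" for n
  proof -
    have nG: "n \<in> carrier G"
      using subgroup.mem_carrier[OF K1 n(2)] .
    have "K2 #> n \<notin> Bad"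
      using n(1) N(2) rcos_self[OF nG sg2] by blast
    then have "\<one> \<in> K2 #> n"
      using n(2) unfolding Bad_def cosets by blast
    then obtain k where k: "k \<in> K2" "\<one> = k \<otimes> n"
      unfolding r_coset_def by blast
    have kG: "k \<in> carrier G"
      using subgroup.mem_carrier[OF sg2 k(1)] .
    have "n = inv k"
      using inv_equality[OF inv_comm[OF k(2)[symmetric] kG nG] kG nG] by simp
    then show ?thesis
      using k(1) sg2 by (simp add: subgroup.m_inv_closed)
  qed
  then show ?thesis
    using N(1) by blast
qed

lemma open_overgroups_succ_cover:
  assumes K1: "closed_subgroup K1 G T" and K2: "closed_subgroup K2 G T"
    and fin: "finite (rcosets\<^bsub>G\<lparr>carrier := K1\<rparr>\<^esub> K2)"
  shows "\<exists>F. (\<forall>V\<in>open_overgroups G T K1. finite (F V))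
    \<and> open_overgroups G T K2 \<subseteq> (\<Union>V\<in>open_overgroups G T K1. F V)"
proof -
  have sg1: "subgroup K1 G"
    using K1 by (simp add: closed_subgroup_def)
  obtain N where N: "open_subgroup N G T" "N \<inter> K1 \<subseteq> K2"
    using exists_open_subgroup_Int_subset[OF sg1 K2 fin] by blast
  have sgN: "subgroup N G"
    using N(1) by (simp add: open_subgroup_def)
  define F where "F V = {U. subgroup U G \<and> V \<inter> N \<subseteq> U}" for V
  have "finite (F V)" if "V \<in> open_overgroups G T K1" for V
  proof -
    have "open_subgroup (V \<inter> N) G T"
      using that N(1) open_subgroup_Int by (simp add: open_overgroups_def)
    then show ?thesis
      unfolding F_def using finite_overgroups[OF _ finite_rcosets_open_subgroup]
      by (simp add: open_subgroup_def)
  qed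
  moreover have "U \<in> (\<Union>V\<in>open_overgroups G T K1. F V)" if U: "U \<in> open_overgroups G T K2" for U
  proof -
    have oU: "open_subgroup U G T" and K2U: "K2 \<subseteq> U"
      using U by (auto simp: open_overgroups_def)
    have sgU: "subgroup U G"
      using oU by (simp add: open_subgroup_def)
    obtain M where M: "M \<lhd> G" "openin T M" "M \<subseteq> U \<inter> N"
      using exists_open_normal_subgroup_subset[OF open_subgroup_Int[OF oU N(1)]] by blast
    have "x \<in> U" if x: "x \<in> (M <#> K1) \<inter> N" for x
    proof -
      obtain y h where yh: "y \<in> M" "h \<in> K1" "x = y \<otimes> h"
        using x unfolding set_mult_def by blast
      have "y \<in> carrier G" "h \<in> carrier G"
        using yh M(3) subgroup.mem_carrier[OF sgU] subgroup.mem_carrier[OF sg1] by auto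
      then have "h = inv y \<otimes> x"
        using yh(3) by (simp add: m_assoc[symmetric])
      also have "\<dots> \<in> N"
        using x yh(1) M(3) sgN by (auto simp: subgroup.m_closed subgroup.m_inv_closed)
      finally have "h \<in> U"
        using yh(2) N(2) K2U by blast
      then show "x \<in> U"
        using yh M(3) sgU by (auto simp: subgroup.m_closed)
    qed
    then have "U \<in> F (M <#> K1)"
      unfolding F_def using sgU by blast
    moreover have "M <#> K1 \<in> open_overgroups G T K1"
      using open_subgroup_normal_set_mult[OF M(1,2) sg1] by (simp add: open_overgroups_def)
    ultimately show ?thesis
      by blast
  qed
  ultimately show ?thesis
    by blast
qed

lemma open_overgroups_Inter_chain:
  fixes K :: "'i::linorder \<Rightarrow> 'a set"
  assumes "I \<noteq> {}" "\<And>i. i \<in> I \<Longrightarrow> closedin T (K i)"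
    and "\<And>i j. i \<in> I \<Longrightarrow> j \<in> I \<Longrightarrow> i \<le> j \<Longrightarrow> K j \<subseteq> K i"
  shows "open_overgroups G T (\<Inter>i\<in>I. K i) \<subseteq> (\<Union>i\<in>I. open_overgroups G T (K i))"
  using compact_space_Inter_chain_subset[OF compact assms]
  by (fastforce simp: open_overgroups_def open_subgroup_def)

lemma open_overgroups_lepoll_accessible_series:
  assumes series: "accessible_series G T Hs m H"
    and fin: "\<forall>a<m. finite (rcosets\<^bsub>G\<lparr>carrier := Hs a\<rparr>\<^esub> (Hs (idx_succ a)))"
    and inf: "infinite (open_overgroups G T H)"
  shows "open_overgroups G T H \<lesssim> {..<m}"
proof -
  note closed = accessible_seriesD(1)[OF series]
  have "open_overgroups G T (Hs m) \<lesssim> {..<m}"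
  proof (rule lepoll_lessThan)
    show "finite (open_overgroups G T (Hs (LEAST i. True)))"
      by (simp add: accessible_seriesD(2)[OF series] open_overgroups_carrier)
    show "\<exists>F. (\<forall>V\<in>open_overgroups G T (Hs b). finite (F V))
      \<and> open_overgroups G T (Hs (idx_succ b)) \<subseteq> (\<Union>V\<in>open_overgroups G T (Hs b). F V)"
      if "b < m" for b
    proof (rule open_overgroups_succ_cover)
      show "closed_subgroup (Hs b) G T" "closed_subgroup (Hs (idx_succ b)) G T"
        using closed idx_succ_least[OF that] that by simp_all
      show "finite (rcosets\<^bsub>G\<lparr>carrier := Hs b\<rparr>\<^esub> (Hs (idx_succ b)))"
        using fin that by simp
    qed
    show "open_overgroups G T (Hs l) \<subseteq> (\<Union>b<l. open_overgroups G T (Hs b))"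
      if "l \<le> m" "idx_limit l" for l
      unfolding accessible_seriesD(5)[OF series that]
      using that closed accessible_seriesD(4)[OF series]
      by (intro open_overgroups_Inter_chain) (auto simp: idx_limit_def closed_subgroup_def)
    show "infinite (open_overgroups G T (Hs m))"
      using inf accessible_seriesD(3)[OF series] by simp
  qed
  then show ?thesis
    using accessible_seriesD(3)[OF series] by simp
qed

lemma lepoll_open_overgroups_accessible_series:
  assumes series: "accessible_series G T Hs m H"
    and proper: "\<forall>a<m. Hs (idx_succ a) \<noteq> Hs a"
  shows "{..<m} \<lesssim> open_overgroups G T H"
proof -
  note closed = accessible_seriesD(1)[OF series]
    and antimono = accessible_seriesD(4)[OF series]
  have "\<exists>U x. open_subgroup U G T \<and> Hs (idx_succ a) \<subseteq> U \<and> x \<in> Hs a \<and> x \<notin> U"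
    if a: "a < m" for a
  proof -
    have succ: "idx_succ a \<le> m" "a \<le> idx_succ a"
      using idx_succ_least[OF a] idx_succ_greater[OF a] by auto
    then obtain x where x: "x \<in> Hs a" "x \<notin> Hs (idx_succ a)"
      using antimono proper a by blast
    have "subgroup (Hs a) G"
      using closed[of a] a by (simp add: closed_subgroup_def)
    then have "x \<in> carrier G"
      using x(1) by (rule subgroup.mem_carrier)
    then show ?thesis
      using exists_open_subgroup_separating[OF closed[OF succ(1)] _ x(2)] x(1) by blast
  qed
  then obtain U x where Ux: "\<And>a. a < m \<Longrightarrow>
      open_subgroup (U a) G T \<and> Hs (idx_succ a) \<subseteq> U a \<and> x a \<in> Hs a \<and> x a \<notin> U a"
    by metis
  have "inj_on U {..<m}"
  proof (rule linorder_inj_onI')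
    fix i j
    assume ij: "i \<in> {..<m}" "j \<in> {..<m}" "i < j"
    then have "Hs j \<subseteq> Hs (idx_succ i)"
      using antimono[OF idx_succ_least[OF ij(3)]] by simp
    then show "U i \<noteq> U j"
      using Ux[of i] Ux[of j] ij by auto
  qed
  moreover have "H \<subseteq> Hs (idx_succ a)" if "a < m" for a
    using antimono[OF idx_succ_least[OF that] order_refl] accessible_seriesD(3)[OF series] by simp
  then have "U ` {..<m} \<subseteq> open_overgroups G T H"
    using Ux by (auto simp: open_overgroups_def)
  ultimately show ?thesis
    unfolding lepoll_def by blast
qed

end

theorem lemma1p13:
  fixes G :: "('a, 'b) monoid_scheme" and T :: "'a topology"
    and Hs :: "'i::wellorder \<Rightarrow> 'a set" and m :: 'i and H :: "'a set"
  assumes "profinite_group G T"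
    and "closed_subgroup H G T"
    and "infinite (rcosets\<^bsub>G\<^esub> H)"
    and "accessible_series G T Hs m H"
    and "\<forall>a<m. finite (rcosets\<^bsub>G\<lparr>carrier := Hs a\<rparr>\<^esub> (Hs (idx_succ a)))
               \<and> Hs (idx_succ a) \<noteq> Hs a"
  shows "{..<m} \<approx> {U. open_subgroup U G T \<and> H \<subseteq> U}"
proof -
  have "group G"
    using assms(1) by (simp add: profinite_group_def topological_group_def)
  then interpret profinite_grp G T
    using assms(1) by (simp add: profinite_grp_def profinite_grp_axioms_def)
  have "open_overgroups G T H \<lesssim> {..<m}"
    using open_overgroups_lepoll_accessible_series assms(4,5)
      infinite_open_overgroups[OF assms(2,3)] by blast
  moreover have "{..<m} \<lesssim> open_overgroups G T H"
    using lepoll_open_overgroups_accessible_series assms(4,5) by blast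
  ultimately show ?thesis
    unfolding open_overgroups_def by (simp add: lepoll_antisym)
qed

end
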